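(* For each $n$, let $P$ be a symmetric $n\times n$ matrix with entries in $[0,1]$ and $P_{ij}=\omega(\log n/n)$ for all pairs $i\ne j$. For a random graph $G$ generated from $P$, with high probability $|\mathrm{BC}(G)-\mathbb{E}[\mathrm{BC}(G)]|=o(\mathbb{E}[\mathrm{BC}(G)])$.
   Context: A random graph generated from $P$ on $V=\{v_1,\dots,v_n\}$ contains each edge $(v_i,v_j)$ independently with probability $P_{ij}$, with unit weight; $w_{ij}=1$ if the edge is present and $0$ otherwise. $\mathrm{BC}(G)=\sum\min\{w_{ij}+w_{ik},w_{ij}+w_{jk},w_{ik}+w_{jk}\}$ over all unordered triples $\{i,j,k\}$ of distinct indices. "With high probability" means with probability larger than $1-n^{-\varepsilon}$ for some constant $\varepsilon>0$. *)

theory Defs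
  imports "HOL-Probability.Probability"
begin

text \<open>Vertices are indexed 0,...,n-1. Unordered pairs are encoded as (i,j) with i < j.\<close>

definition pairs :: "nat \<Rightarrow> (nat \<times> nat) set" where
  "pairs n = {(i, j). i < j \<and> j < n}"

definition random_graph :: "nat \<Rightarrow> (nat \<Rightarrow> nat \<Rightarrow> real) \<Rightarrow> (nat \<times> nat \<Rightarrow> bool) pmf" where
  "random_graph n P = Pi_pmf (pairs n) False (\<lambda>(i, j). bernoulli_pmf (P i j))"

definition wt :: "(nat \<times> nat \<Rightarrow> bool) \<Rightarrow> nat \<Rightarrow> nat \<Rightarrow> real" where
  "wt G i j = (if i < j then (if G (i, j) then 1 else 0)
               else if j < i then (if G (j, i) then 1 else 0) else 0)"

definition BC :: "nat \<Rightarrow> (nat \<times> nat \<Rightarrow> bool) \<Rightarrow> real" where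
  "BC n G = (\<Sum>(i, j, k) \<in> {(i, j, k). i < j \<and> j < k \<and> k < n}.
      min (wt G i j + wt G i k) (min (wt G i j + wt G j k) (wt G i k + wt G j k)))"

end

theory Submission
  imports Defs "HOL-Real_Asymp.Real_Asymp"
begin

(* BC(G) is a sum over triangles T of F_T = xy + xz + yz - xyz in the indicators x, y, z of the edges
   of T, so by Chebyshev's inequality it suffices that Var BC = o((E BC)^2).  Edge-disjoint triangles
   are independent, and two triangles sharing exactly one edge e have covariance at most p_e times the
   product of the total probabilities of their other edges; summing over pairs gives
   Var BC <= 2 E BC + sum_e p_e R_e^2 with R_ij = d_i + d_j - 2 p_ij, where d_i is the expected degree
   of i.  Once every d_i >= 2, both E BC and sum_e p_e R_e are comparable to sum_i d_i^2, while
   R_e <= 2 sqrt (sum_i d_i^2); hence Var BC = O((E BC)^(3/2)).  The hypothesis p_ij = omega(log n / n)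
   gives d_i >= 2, so E BC >= 2n/3, and deviations of relative size n^(-1/8) have probability
   O(n^(-1/4)). *)

lemma prob_near_expectation_ge:
  fixes N :: "'a pmf"
  assumes "integrable N (\<lambda>x. (X x)\<^sup>2)" "0 < a"
  shows "1 - measure_pmf.variance N X / a\<^sup>2
    \<le> measure_pmf.prob N {x. \<bar>X x - measure_pmf.expectation N X\<bar> \<le> a}"
proof -
  let ?far = "{x. a \<le> \<bar>X x - measure_pmf.expectation N X\<bar>}"
  have "measure_pmf.prob N {x \<in> space (measure_pmf N). a \<le> \<bar>X x - measure_pmf.expectation N X\<bar>}
      \<le> measure_pmf.variance N X / a\<^sup>2"
    by (rule measure_pmf.Chebyshev_inequality) (use assms in simp_all)
  then have "measure_pmf.prob N ?far \<le> measure_pmf.variance N X / a\<^sup>2"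
    by simp
  moreover have "measure_pmf.prob N (UNIV - ?far)
      \<le> measure_pmf.prob N {x. \<bar>X x - measure_pmf.expectation N X\<bar> \<le> a}"
    by (intro measure_pmf.finite_measure_mono) auto
  moreover have "measure_pmf.prob N (space (measure_pmf N) - ?far) = 1 - measure_pmf.prob N ?far"
    by (rule measure_pmf.prob_compl) simp
  ultimately show ?thesis
    by simp
qed

definition edge_monomial :: "'a set \<Rightarrow> ('a \<Rightarrow> bool) \<Rightarrow> real" where
  "edge_monomial A G = of_bool (\<forall>e\<in>A. G e)"

lemma edge_monomial_mult: "edge_monomial A G * edge_monomial B G = edge_monomial (A \<union> B) G"
  by (auto simp: edge_monomial_def)

definition tri_weight :: "('a \<Rightarrow> bool) \<Rightarrow> 'a \<Rightarrow> 'a \<Rightarrow> 'a \<Rightarrow> real" where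
  "tri_weight G e f g = min (of_bool (G e) + of_bool (G f))
     (min (of_bool (G e) + of_bool (G g)) (of_bool (G f) + of_bool (G g)))"

lemma tri_weight_eq_monomials:
  "tri_weight G e f g = edge_monomial {e, f} G + edge_monomial {e, g} G + edge_monomial {f, g} G
     - edge_monomial {e, f, g} G"
  by (cases "G e"; cases "G f"; cases "G g") (auto simp: tri_weight_def edge_monomial_def)

lemma tri_weight_square_le: "tri_weight G e f g ^ 2 \<le> 2 * tri_weight G e f g"
  by (cases "G e"; cases "G f"; cases "G g") (auto simp: tri_weight_def)

lemma tri_weight_swap12: "tri_weight G e f g = tri_weight G f e g"
  and tri_weight_swap23: "tri_weight G e f g = tri_weight G e g f"
  by (auto simp: tri_weight_def min.commute min.left_commute add.commute)

locale bernoulli_family =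
  fixes I :: "'a set" and q :: "'a \<Rightarrow> real"
  assumes finite_index: "finite I"
    and prob_nonneg: "e \<in> I \<Longrightarrow> 0 \<le> q e"
    and prob_le_1: "e \<in> I \<Longrightarrow> q e \<le> 1"
begin

abbreviation M :: "('a \<Rightarrow> bool) pmf" where
  "M \<equiv> Pi_pmf I False (\<lambda>e. bernoulli_pmf (q e))"

abbreviation E :: "(('a \<Rightarrow> bool) \<Rightarrow> real) \<Rightarrow> real" where
  "E \<equiv> measure_pmf.expectation M"

abbreviation cov :: "(('a \<Rightarrow> bool) \<Rightarrow> real) \<Rightarrow> (('a \<Rightarrow> bool) \<Rightarrow> real) \<Rightarrow> real" where
  "cov X Y \<equiv> E (\<lambda>G. X G * Y G) - E X * E Y"

lemma finite_support: "finite (set_pmf M)"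
  by (rule finite_subset[OF set_Pi_pmf_subset'[OF finite_index]])
     (auto intro!: finite_PiE_dflt finite_index)

lemma integrable_M [simp]: "integrable M (X :: _ \<Rightarrow> real)"
  by (rule integrable_measure_pmf_finite[OF finite_support])

lemma expectation_monomial:
  assumes "A \<subseteq> I"
  shows "E (edge_monomial A) = (\<Prod>e\<in>A. q e)"
proof -
  have "edge_monomial A = (\<lambda>G. \<Prod>e\<in>I. if e \<in> A then of_bool (G e) else 1)"
    using assms finite_index finite_subset[OF assms finite_index]
    by (auto simp: edge_monomial_def prod.If_cases Int_absorb1 prod_zero_iff)
  then have "E (edge_monomial A) =
      (\<Prod>e\<in>I. measure_pmf.expectation (bernoulli_pmf (q e)) (\<lambda>v. if e \<in> A then of_bool v else 1))"
    by (simp only:) (rule expectation_prod_Pi_pmf[OF finite_index], auto intro: integrable_measure_pmf_finite)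
  also have "\<dots> = (\<Prod>e\<in>I. if e \<in> A then q e else 1)"
    using prob_nonneg prob_le_1 by (intro prod.cong) auto
  finally show ?thesis
    using assms finite_index by (simp add: prod.If_cases Int_absorb1)
qed

lemma expectation_tri_weight:
  assumes "{e, f, g} \<subseteq> I" "distinct [e, f, g]"
  shows "E (\<lambda>G. tri_weight G e f g) = q e * q f + q e * q g + q f * q g - q e * q f * q g"
  using assms by (simp add: tri_weight_eq_monomials expectation_monomial)

lemma cov_tri_weight_self:
  "cov (\<lambda>G. tri_weight G e f g) (\<lambda>G. tri_weight G e f g) \<le> 2 * E (\<lambda>G. tri_weight G e f g)"
proof -
  have "E (\<lambda>G. tri_weight G e f g * tri_weight G e f g) \<le> E (\<lambda>G. 2 * tri_weight G e f g)"
    by (intro integral_mono) (auto simp: tri_weight_square_le[unfolded power2_eq_square])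
  also have "\<dots> = 2 * E (\<lambda>G. tri_weight G e f g)"
    by simp
  finally show ?thesis
    using zero_le_square[of "E (\<lambda>G. tri_weight G e f g)"] by linarith
qed

lemma cov_tri_weight_disjoint:
  assumes "{e, f, g, e', f', g'} \<subseteq> I" "distinct [e, f, g, e', f', g']"
  shows "cov (\<lambda>G. tri_weight G e f g) (\<lambda>G. tri_weight G e' f' g') = 0"
  using assms distinct_rev[THEN iffD2, OF assms(2)]
  by (simp add: tri_weight_eq_monomials ring_distribs edge_monomial_mult expectation_monomial insert_commute)

lemma cov_tri_weight_shared:
  assumes "{e, f, g, f', g'} \<subseteq> I" "distinct [e, f, g, f', g']"
  shows "cov (\<lambda>G. tri_weight G e f g) (\<lambda>G. tri_weight G e f' g') \<le> q e * (q f + q g) * (q f' + q g')"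
proof -
  have cov_eq: "cov (\<lambda>G. tri_weight G e f g) (\<lambda>G. tri_weight G e f' g')
      = q e * (1 - q e) * (q f + q g - q f * q g) * (q f' + q g' - q f' * q g')"
    using assms distinct_rev[THEN iffD2, OF assms(2)]
    by (simp add: tri_weight_eq_monomials ring_distribs edge_monomial_mult expectation_monomial insert_commute)
  have le_add: "q x * q y \<le> q x + q y" if "x \<in> I" "y \<in> I" for x y
    using that prob_nonneg[of x] prob_nonneg[of y] prob_le_1[of y] mult_left_le[of "q y" "q x"]
    by linarith
  have "q e * (1 - q e) * (q f + q g - q f * q g) * (q f' + q g' - q f' * q g')
      \<le> q e * 1 * (q f + q g) * (q f' + q g')"
    using assms prob_nonneg prob_le_1 le_add by (intro mult_mono) auto
  then show ?thesis
    using cov_eq by simp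
qed

lemma variance_sum:
  assumes "finite S"
  shows "measure_pmf.variance M (\<lambda>G. \<Sum>T\<in>S. X T G) = (\<Sum>T\<in>S. \<Sum>T'\<in>S. cov (X T) (X T'))"
proof -
  have "measure_pmf.variance M (\<lambda>G. \<Sum>T\<in>S. X T G)
      = E (\<lambda>G. (\<Sum>T\<in>S. X T G)\<^sup>2) - (E (\<lambda>G. \<Sum>T\<in>S. X T G))\<^sup>2"
    by (rule measure_pmf.variance_eq) simp_all
  then show ?thesis
    by (simp add: power2_eq_square sum_product sum_subtractf)
qed

end

definition triangles :: "nat \<Rightarrow> (nat \<times> nat \<times> nat) set" where
  "triangles n = {(a, b, c). a < b \<and> b < c \<and> c < n}"

definition tri_edges :: "nat \<times> nat \<times> nat \<Rightarrow> (nat \<times> nat) set" where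
  "tri_edges = (\<lambda>(a, b, c). {(a, b), (a, c), (b, c)})"

definition tri_term :: "(nat \<times> nat \<Rightarrow> bool) \<Rightarrow> nat \<times> nat \<times> nat \<Rightarrow> real" where
  "tri_term G = (\<lambda>(a, b, c). tri_weight G (a, b) (a, c) (b, c))"

lemma finite_triangles: "finite (triangles n)"
  by (rule finite_subset[of _ "{..<n} \<times> {..<n} \<times> {..<n}"]) (auto simp: triangles_def)

lemma finite_pairs: "finite (pairs n)"
  by (rule finite_subset[of _ "{..<n} \<times> {..<n}"]) (auto simp: pairs_def)

lemma BC_eq_sum_triangles: "BC n G = (\<Sum>T\<in>triangles n. tri_term G T)"
  unfolding BC_def triangles_def
  by (intro sum.cong) (auto simp: tri_term_def tri_weight_def wt_def)

lemma tri_edges_subset_pairs: "T \<in> triangles n \<Longrightarrow> tri_edges T \<subseteq> pairs n"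
  by (auto simp: triangles_def tri_edges_def pairs_def)

lemma triangle_eq_if_two_common_edges:
  assumes "T \<in> triangles n" "T' \<in> triangles n" "e \<noteq> f" "{e, f} \<subseteq> tri_edges T" "{e, f} \<subseteq> tri_edges T'"
  shows "T = T'"
  using assms by (auto simp: triangles_def tri_edges_def)

lemma tri_term_rotate:
  assumes "T \<in> triangles n" "e \<in> tri_edges T"
  obtains f g where "tri_edges T = {e, f, g}" "distinct [e, f, g]" "\<And>G. tri_term G T = tri_weight G e f g"
proof -
  obtain a b c where T: "T = (a, b, c)" "a < b" "b < c"
    using assms(1) by (auto simp: triangles_def)
  from assms(2) consider "e = (a, b)" | "e = (a, c)" | "e = (b, c)"
    by (auto simp: T tri_edges_def)
  then show ?thesis
  proof cases
    case 1
    then show ?thesis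
      using T by (intro that[of "(a, c)" "(b, c)"]) (auto simp: tri_edges_def tri_term_def)
  next
    case 2
    then show ?thesis
      using T by (intro that[of "(a, b)" "(b, c)"]) (auto simp: tri_edges_def tri_term_def tri_weight_swap12)
  next
    case 3
    then show ?thesis
      using T by (intro that[of "(a, b)" "(a, c)"])
        (auto simp: tri_edges_def tri_term_def, metis tri_weight_swap12 tri_weight_swap23)
  qed
qed

definition link_weight :: "(nat \<Rightarrow> nat \<Rightarrow> real) \<Rightarrow> nat \<times> nat \<times> nat \<Rightarrow> nat \<times> nat \<Rightarrow> real" where
  "link_weight p T e = (if e \<in> tri_edges T then \<Sum>f\<in>tri_edges T - {e}. case_prod p f else 0)"

(* the expected number of edges meeting e in exactly one vertex *)
definition adjacent_mass :: "nat \<Rightarrow> (nat \<Rightarrow> nat \<Rightarrow> real) \<Rightarrow> nat \<times> nat \<Rightarrow> real" where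
  "adjacent_mass n p e = (\<Sum>T\<in>triangles n. link_weight p T e)"

definition exp_degree :: "nat \<Rightarrow> (nat \<Rightarrow> nat \<Rightarrow> real) \<Rightarrow> nat \<Rightarrow> real" where
  "exp_degree n p i = (\<Sum>j\<in>{..<n} - {i}. p i j)"

lemma sum_pairs_symmetric:
  "(\<Sum>(i, j)\<in>pairs n. g i j + g j i) = (\<Sum>i<n. \<Sum>j\<in>{..<n} - {i}. g i j :: real)"
proof -
  have offdiag: "(SIGMA i:{..<n}. {..<n} - {i}) = pairs n \<union> prod.swap ` pairs n"
    by (auto simp: pairs_def image_iff neq_iff)
  have "(\<Sum>(i, j)\<in>pairs n. g i j + g j i) = (\<Sum>(i, j)\<in>pairs n. g i j) + (\<Sum>(i, j)\<in>prod.swap ` pairs n. g i j)"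
    by (simp add: sum.distrib sum.reindex split_def)
  also have "\<dots> = (\<Sum>(i, j)\<in>(SIGMA i:{..<n}. {..<n} - {i}). g i j)"
    unfolding offdiag by (rule sum.union_disjoint[symmetric]) (auto simp: finite_pairs, auto simp: pairs_def)
  also have "\<dots> = (\<Sum>i<n. \<Sum>j\<in>{..<n} - {i}. g i j)"
    by (rule sum.Sigma[symmetric]) auto
  finally show ?thesis .
qed

lemma exp_degree_ge:
  assumes "i < n" "\<And>j. j < n \<Longrightarrow> j \<noteq> i \<Longrightarrow> L \<le> p i j"
  shows "(real n - 1) * L \<le> exp_degree n p i"
proof -
  have "(\<Sum>j\<in>{..<n} - {i}. L) \<le> exp_degree n p i"
    unfolding exp_degree_def using assms(2) by (intro sum_mono) auto
  then show ?thesis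
    using assms(1) by (simp add: of_nat_diff)
qed

lemma eventually_exp_degree_ge_2:
  assumes "eventually (\<lambda>n. \<forall>i<n. \<forall>j<n. i \<noteq> j \<longrightarrow> P n i j \<ge> 4 * (ln (real n) / real n)) sequentially"
  shows "eventually (\<lambda>n. \<forall>i<n. 2 \<le> exp_degree n (P n) i) sequentially"
proof -
  have "eventually (\<lambda>n. 2 \<le> (real n - 1) * (4 * (ln (real n) / real n))) sequentially"
    by real_asymp
  with assms show ?thesis
  proof eventually_elim
    case (elim n)
    have "(real n - 1) * (4 * (ln (real n) / real n)) \<le> exp_degree n (P n) i" if "i < n" for i
      by (rule exp_degree_ge) (use elim(1) that in auto)
    with elim(2) show ?case
      by force
  qed
qed

locale edge_probabilities =
  fixes n :: nat and p :: "nat \<Rightarrow> nat \<Rightarrow> real"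
  assumes p_nonneg: "i < n \<Longrightarrow> j < n \<Longrightarrow> 0 \<le> p i j"
    and p_le_1: "i < n \<Longrightarrow> j < n \<Longrightarrow> p i j \<le> 1"
    and p_sym: "i < n \<Longrightarrow> j < n \<Longrightarrow> p i j = p j i"
begin

sublocale bernoulli_family "pairs n" "case_prod p"
  by unfold_locales (use finite_pairs in \<open>auto simp: pairs_def p_nonneg p_le_1\<close>)

lemma random_graph_eq: "random_graph n p = M"
  by (simp add: random_graph_def case_prod_unfold)

lemma link_weight_nonneg:
  assumes "T \<in> triangles n"
  shows "0 \<le> link_weight p T e"
proof -
  have "0 \<le> case_prod p f" if "f \<in> tri_edges T" for f
    using prob_nonneg tri_edges_subset_pairs[OF assms] that by blast
  then show ?thesis
    by (auto simp: link_weight_def intro: sum_nonneg)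
qed

lemma adjacent_mass_nonneg: "0 \<le> adjacent_mass n p e"
  unfolding adjacent_mass_def by (intro sum_nonneg link_weight_nonneg)

lemma cov_tri_term_common_edge:
  assumes "T \<in> triangles n" "T' \<in> triangles n" "T \<noteq> T'" "e \<in> tri_edges T" "e \<in> tri_edges T'"
  shows "cov (\<lambda>G. tri_term G T) (\<lambda>G. tri_term G T') \<le> case_prod p e * link_weight p T e * link_weight p T' e"
proof -
  obtain f g where fg: "tri_edges T = {e, f, g}" "distinct [e, f, g]" "\<And>G. tri_term G T = tri_weight G e f g"
    using tri_term_rotate[OF assms(1,4)] by blast
  obtain f' g' where fg': "tri_edges T' = {e, f', g'}" "distinct [e, f', g']" "\<And>G. tri_term G T' = tri_weight G e f' g'"
    using tri_term_rotate[OF assms(2,5)] by blast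
  have "f \<notin> tri_edges T'" "g \<notin> tri_edges T'"
    using triangle_eq_if_two_common_edges[OF assms(1,2), of e f] triangle_eq_if_two_common_edges[OF assms(1,2), of e g]
      assms(3,5) fg
    by auto
  then have distinct: "distinct [e, f, g, f', g']"
    using fg fg' by auto
  have edges: "{e, f, g, f', g'} \<subseteq> pairs n"
    using fg fg' tri_edges_subset_pairs[OF assms(1)] tri_edges_subset_pairs[OF assms(2)] by auto
  show ?thesis
    using cov_tri_weight_shared[OF edges distinct] fg fg' by (simp add: link_weight_def)
qed

lemma cov_tri_term:
  assumes "T \<in> triangles n" "T' \<in> triangles n"
  shows "cov (\<lambda>G. tri_term G T) (\<lambda>G. tri_term G T')
    \<le> (if T = T' then 2 * E (\<lambda>G. tri_term G T) else 0)
       + (\<Sum>e\<in>pairs n. case_prod p e * link_weight p T e * link_weight p T' e)"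
proof -
  have link_sum_nonneg: "0 \<le> (\<Sum>e\<in>pairs n. case_prod p e * link_weight p T e * link_weight p T' e)"
    using assms prob_nonneg link_weight_nonneg by (intro sum_nonneg mult_nonneg_nonneg) auto
  consider "T = T'"
    | "T \<noteq> T'" "tri_edges T \<inter> tri_edges T' = {}"
    | e where "T \<noteq> T'" "e \<in> tri_edges T" "e \<in> tri_edges T'"
    by blast
  then show ?thesis
  proof cases
    case 1
    obtain e f g where "\<And>G. tri_term G T = tri_weight G e f g"
      using assms(1) by (auto simp: triangles_def tri_term_def)
    then show ?thesis
      using 1 link_sum_nonneg cov_tri_weight_self[of e f g] by simp
  next
    case 2
    obtain a b c a' b' c' where "T = (a, b, c)" "T' = (a', b', c')"
      by (cases T, cases T')
    then have "cov (\<lambda>G. tri_term G T) (\<lambda>G. tri_term G T') = 0"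
      using 2 assms tri_edges_subset_pairs[OF assms(1)] tri_edges_subset_pairs[OF assms(2)]
      by (simp only: tri_term_def prod.case)
        (rule cov_tri_weight_disjoint; auto simp: triangles_def tri_edges_def)
    then show ?thesis
      using 2 link_sum_nonneg by simp
  next
    case 3
    then have "cov (\<lambda>G. tri_term G T) (\<lambda>G. tri_term G T')
        \<le> case_prod p e * link_weight p T e * link_weight p T' e"
      using assms by (intro cov_tri_term_common_edge)
    also have "\<dots> \<le> (\<Sum>e\<in>pairs n. case_prod p e * link_weight p T e * link_weight p T' e)"
      using assms 3 tri_edges_subset_pairs[OF assms(1)] prob_nonneg link_weight_nonneg
      by (intro member_le_sum mult_nonneg_nonneg finite_pairs) auto
    finally show ?thesis
      using 3 by simp
  qed
qed

lemma expectation_BC: "E (BC n) = (\<Sum>T\<in>triangles n. E (\<lambda>G. tri_term G T))"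
  unfolding BC_eq_sum_triangles[abs_def] by (rule Bochner_Integration.integral_sum) simp

lemma variance_BC_le_adjacent_mass:
  "measure_pmf.variance M (BC n) \<le> 2 * E (BC n) + (\<Sum>e\<in>pairs n. case_prod p e * (adjacent_mass n p e)\<^sup>2)"
proof -
  have "measure_pmf.variance M (BC n)
      = (\<Sum>T\<in>triangles n. \<Sum>T'\<in>triangles n. cov (\<lambda>G. tri_term G T) (\<lambda>G. tri_term G T'))"
    unfolding BC_eq_sum_triangles[abs_def] by (rule variance_sum[OF finite_triangles])
  also have "\<dots> \<le> (\<Sum>T\<in>triangles n. \<Sum>T'\<in>triangles n.
      (if T = T' then 2 * E (\<lambda>G. tri_term G T) else 0)
      + (\<Sum>e\<in>pairs n. case_prod p e * link_weight p T e * link_weight p T' e))"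
    by (intro sum_mono cov_tri_term)
  also have "\<dots> = 2 * E (BC n)
      + (\<Sum>T\<in>triangles n. \<Sum>T'\<in>triangles n. \<Sum>e\<in>pairs n. case_prod p e * link_weight p T e * link_weight p T' e)"
    by (simp add: sum.distrib expectation_BC sum_distrib_left finite_triangles)
  also have "(\<Sum>T\<in>triangles n. \<Sum>T'\<in>triangles n. \<Sum>e\<in>pairs n. case_prod p e * link_weight p T e * link_weight p T' e)
      = (\<Sum>e\<in>pairs n. \<Sum>T\<in>triangles n. \<Sum>T'\<in>triangles n. case_prod p e * link_weight p T e * link_weight p T' e)"
    by (subst sum.swap) (simp only: sum.swap[of _ "triangles n" "pairs n"])
  also have "\<dots> = (\<Sum>e\<in>pairs n. case_prod p e * (adjacent_mass n p e)\<^sup>2)"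
    unfolding adjacent_mass_def power2_eq_square sum_product by (simp only: sum_distrib_left mult.assoc)
  finally show ?thesis .
qed

lemma sum_other_vertices_eq_exp_degree:
  assumes "i < j" "j < n"
  shows "(\<Sum>c\<in>{..<n} - {i, j}. p i c + p j c) = exp_degree n p i + exp_degree n p j - 2 * p i j"
proof -
  have minus: "{..<n} - {i} - {j} = {..<n} - {i, j}" "{..<n} - {j} - {i} = {..<n} - {i, j}"
    by auto
  have "exp_degree n p i = p i j + (\<Sum>c\<in>{..<n} - {i, j}. p i c)"
    using assms unfolding exp_degree_def minus(1)[symmetric] by (intro sum.remove) auto
  moreover have "exp_degree n p j = p j i + (\<Sum>c\<in>{..<n} - {i, j}. p j c)"
    using assms unfolding exp_degree_def minus(2)[symmetric] by (intro sum.remove) auto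
  moreover have "p j i = p i j"
    using assms p_sym[of j i] by simp
  ultimately show ?thesis
    using sum.distrib[of "p i" "p j" "{..<n} - {i, j}"] by linarith
qed

lemma adjacent_mass_eq:
  assumes "i < j" "j < n"
  shows "adjacent_mass n p (i, j) = exp_degree n p i + exp_degree n p j - 2 * p i j"
proof -
  define third where "third c = (if c < i then (c, i, j) else if c < j then (i, c, j) else (i, j, c))" for c
  have through: "{T\<in>triangles n. (i, j) \<in> tri_edges T} = third ` ({..<n} - {i, j})"
  proof (intro equalityI subsetI)
    fix T assume "T \<in> {T\<in>triangles n. (i, j) \<in> tri_edges T}"
    then obtain a b c where T: "T = (a, b, c)" "a < b" "b < c" "c < n" "(i, j) \<in> {(a, b), (a, c), (b, c)}"
      by (auto simp: triangles_def tri_edges_def)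
    then consider "T = third c" "c \<in> {..<n} - {i, j}"
      | "T = third b" "b \<in> {..<n} - {i, j}"
      | "T = third a" "a \<in> {..<n} - {i, j}"
      by (auto simp: third_def)
    then show "T \<in> third ` ({..<n} - {i, j})"
      by cases auto
  next
    fix T assume "T \<in> third ` ({..<n} - {i, j})"
    then show "T \<in> {T\<in>triangles n. (i, j) \<in> tri_edges T}"
      using assms by (auto simp: third_def triangles_def tri_edges_def)
  qed
  have "inj_on third ({..<n} - {i, j})"
    by (auto simp: inj_on_def third_def split: if_splits)
  have "adjacent_mass n p (i, j)
      = (\<Sum>T\<in>{T\<in>triangles n. (i, j) \<in> tri_edges T}. \<Sum>f\<in>tri_edges T - {(i, j)}. case_prod p f)"
    by (simp add: adjacent_mass_def link_weight_def sum.inter_filter finite_triangles)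
  also have "\<dots> = (\<Sum>c\<in>{..<n} - {i, j}. p i c + p j c)"
    unfolding through sum.reindex[OF \<open>inj_on third _\<close>] using assms
    by (intro sum.cong) (auto simp: third_def tri_edges_def insert_Diff_if p_sym[of _ i] p_sym[of _ j])
  also have "\<dots> = exp_degree n p i + exp_degree n p j - 2 * p i j"
    using assms by (rule sum_other_vertices_eq_exp_degree)
  finally show ?thesis .
qed

lemma p_swap_pairs: "(i, j) \<in> pairs n \<Longrightarrow> p j i = p i j"
  using p_sym[of i j] by (simp add: pairs_def)

lemma sum_edge_prob: "(\<Sum>e\<in>pairs n. case_prod p e) = (\<Sum>i<n. exp_degree n p i) / 2"
proof -
  have "(\<Sum>i<n. exp_degree n p i) = (\<Sum>(i, j)\<in>pairs n. p i j + p j i)"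
    unfolding exp_degree_def by (rule sum_pairs_symmetric[symmetric])
  also have "\<dots> = (\<Sum>(i, j)\<in>pairs n. 2 * p i j)"
    by (intro sum.cong refl) (clarsimp dest!: p_swap_pairs)
  finally show ?thesis
    by (simp add: sum_distrib_left[symmetric] split_def)
qed

lemma sum_link_weight_le:
  assumes "T \<in> triangles n"
  shows "(\<Sum>e\<in>pairs n. case_prod p e * link_weight p T e) \<le> 3 * E (\<lambda>G. tri_term G T)"
proof -
  obtain a b c where T: "T = (a, b, c)" "a < b" "b < c" "c < n"
    using assms by (auto simp: triangles_def)
  define x y z where "x = p a b" "y = p a c" "z = p b c"
  have xyz: "0 \<le> x" "x \<le> 1" "0 \<le> y" "y \<le> 1" "0 \<le> z" "z \<le> 1"
    using T by (auto simp: x_y_z_def p_nonneg p_le_1)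
  have "(\<Sum>e\<in>pairs n. case_prod p e * link_weight p T e) = (\<Sum>e\<in>tri_edges T. case_prod p e * link_weight p T e)"
    using tri_edges_subset_pairs[OF assms]
    by (intro sum.mono_neutral_right finite_pairs) (auto simp: link_weight_def)
  also have "\<dots> = 2 * (x * y + x * z + y * z)"
    using T by (simp add: tri_edges_def link_weight_def x_y_z_def insert_Diff_if algebra_simps)
  also have "\<dots> \<le> 3 * (x * y + x * z + y * z - x * y * z)"
    using xyz mult_left_le[of z "x * y"] mult_left_le[of y "x * z"] mult_left_le[of x "y * z"]
    by (simp add: algebra_simps)
  also have "x * y + x * z + y * z - x * y * z = E (\<lambda>G. tri_term G T)"
    using T tri_edges_subset_pairs[OF assms]
    by (simp add: tri_term_def tri_edges_def expectation_tri_weight x_y_z_def)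
  finally show ?thesis .
qed

lemma weighted_adjacent_mass_le: "(\<Sum>e\<in>pairs n. case_prod p e * adjacent_mass n p e) \<le> 3 * E (BC n)"
proof -
  have "(\<Sum>e\<in>pairs n. case_prod p e * adjacent_mass n p e)
      = (\<Sum>T\<in>triangles n. \<Sum>e\<in>pairs n. case_prod p e * link_weight p T e)"
    unfolding adjacent_mass_def sum_distrib_left by (rule sum.swap)
  also have "\<dots> \<le> (\<Sum>T\<in>triangles n. 3 * E (\<lambda>G. tri_term G T))"
    by (intro sum_mono sum_link_weight_le)
  also have "\<dots> = 3 * E (BC n)"
    by (simp add: expectation_BC sum_distrib_left)
  finally show ?thesis .
qed

lemma sum_edge_prob_degree:
  "(\<Sum>(i, j)\<in>pairs n. p i j * (exp_degree n p i + exp_degree n p j)) = (\<Sum>i<n. (exp_degree n p i)\<^sup>2)"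
proof -
  have "(\<Sum>(i, j)\<in>pairs n. p i j * (exp_degree n p i + exp_degree n p j))
      = (\<Sum>(i, j)\<in>pairs n. p i j * exp_degree n p i + p j i * exp_degree n p j)"
    by (intro sum.cong refl) (clarsimp simp: distrib_left dest!: p_swap_pairs)
  also have "\<dots> = (\<Sum>i<n. \<Sum>j\<in>{..<n} - {i}. p i j * exp_degree n p i)"
    by (rule sum_pairs_symmetric)
  finally show ?thesis
    by (simp add: exp_degree_def power2_eq_square sum_distrib_right)
qed

lemma weighted_adjacent_mass_eq:
  "(\<Sum>e\<in>pairs n. case_prod p e * adjacent_mass n p e)
     = (\<Sum>i<n. (exp_degree n p i)\<^sup>2) - 2 * (\<Sum>e\<in>pairs n. (case_prod p e)\<^sup>2)"
proof -
  have "(\<Sum>e\<in>pairs n. case_prod p e * adjacent_mass n p e)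
      = (\<Sum>(i, j)\<in>pairs n. p i j * (exp_degree n p i + exp_degree n p j) - 2 * (p i j)\<^sup>2)"
    by (intro sum.cong refl) (auto simp: pairs_def adjacent_mass_eq power2_eq_square algebra_simps)
  then show ?thesis
    by (simp add: sum_subtractf sum_edge_prob_degree[unfolded split_def] sum_distrib_left split_def)
qed

lemma exp_degree_nonneg: "i < n \<Longrightarrow> 0 \<le> exp_degree n p i"
  unfolding exp_degree_def by (intro sum_nonneg) (simp add: p_nonneg)

lemma sum_degree_sq_le:
  assumes deg: "\<And>i. i < n \<Longrightarrow> 2 \<le> exp_degree n p i"
  shows "(\<Sum>i<n. (exp_degree n p i)\<^sup>2) \<le> 6 * E (BC n)"
proof -
  have "(\<Sum>e\<in>pairs n. (case_prod p e)\<^sup>2) \<le> (\<Sum>e\<in>pairs n. case_prod p e)"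
    using prob_nonneg prob_le_1 by (intro sum_mono) (simp add: power2_eq_square mult_left_le)
  also have "\<dots> \<le> (\<Sum>i<n. (exp_degree n p i)\<^sup>2) / 4"
  proof -
    have "2 * exp_degree n p i \<le> (exp_degree n p i)\<^sup>2" if "i < n" for i
      using deg[OF that] mult_right_mono[OF deg[OF that], of "exp_degree n p i"]
      by (simp add: power2_eq_square)
    then have "2 * (\<Sum>i<n. exp_degree n p i) \<le> (\<Sum>i<n. (exp_degree n p i)\<^sup>2)"
      unfolding sum_distrib_left by (intro sum_mono) auto
    then show ?thesis
      unfolding sum_edge_prob by simp
  qed
  finally show ?thesis
    using weighted_adjacent_mass_eq weighted_adjacent_mass_le by simp
qed

lemma adjacent_mass_le:
  assumes "e \<in> pairs n"
  shows "adjacent_mass n p e \<le> 2 * sqrt (\<Sum>i<n. (exp_degree n p i)\<^sup>2)"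
proof -
  obtain i j where e: "e = (i, j)" "i < j" "j < n"
    using assms by (auto simp: pairs_def)
  have le_sqrt: "exp_degree n p k \<le> sqrt (\<Sum>i<n. (exp_degree n p i)\<^sup>2)" if "k < n" for k
    using that exp_degree_nonneg[OF that] member_le_sum[of k "{..<n}" "\<lambda>i. (exp_degree n p i)\<^sup>2"]
    by (auto intro: real_le_rsqrt)
  have "adjacent_mass n p e = exp_degree n p i + exp_degree n p j - 2 * p i j"
    using e by (simp add: adjacent_mass_eq)
  then show ?thesis
    using e le_sqrt[of i] le_sqrt[of j] p_nonneg[of i j] by simp
qed

lemma variance_BC_le_sqrt:
  assumes deg: "\<And>i. i < n \<Longrightarrow> 2 \<le> exp_degree n p i"
  shows "measure_pmf.variance M (BC n) \<le> 2 * E (BC n) + 6 * sqrt (6 * E (BC n)) * E (BC n)"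
proof -
  define Q where "Q = (\<Sum>i<n. (exp_degree n p i)\<^sup>2)"
  have "(\<Sum>e\<in>pairs n. case_prod p e * (adjacent_mass n p e)\<^sup>2)
      \<le> (\<Sum>e\<in>pairs n. case_prod p e * adjacent_mass n p e * (2 * sqrt Q))"
  proof (intro sum_mono)
    fix e assume "e \<in> pairs n"
    then show "case_prod p e * (adjacent_mass n p e)\<^sup>2 \<le> case_prod p e * adjacent_mass n p e * (2 * sqrt Q)"
      using adjacent_mass_le[of e] adjacent_mass_nonneg[of e] prob_nonneg[of e]
      by (simp add: Q_def power2_eq_square mult.assoc mult_left_mono)
  qed
  also have "\<dots> = 2 * sqrt Q * (\<Sum>e\<in>pairs n. case_prod p e * adjacent_mass n p e)"
    by (simp add: sum_distrib_left ac_simps)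
  also have "\<dots> \<le> 2 * sqrt (6 * E (BC n)) * (3 * E (BC n))"
  proof (rule mult_mono)
    have "0 \<le> Q"
      unfolding Q_def by (intro sum_nonneg) simp
    moreover have "Q \<le> 6 * E (BC n)"
      using sum_degree_sq_le[OF deg] by (simp add: Q_def)
    ultimately have "0 \<le> E (BC n)" "sqrt Q \<le> sqrt (6 * E (BC n))"
      by simp_all
    then show "2 * sqrt Q \<le> 2 * sqrt (6 * E (BC n))" "0 \<le> 2 * sqrt (6 * E (BC n))"
      by simp_all
    show "(\<Sum>e\<in>pairs n. case_prod p e * adjacent_mass n p e) \<le> 3 * E (BC n)"
      by (rule weighted_adjacent_mass_le)
    show "0 \<le> (\<Sum>e\<in>pairs n. case_prod p e * adjacent_mass n p e)"
      using prob_nonneg adjacent_mass_nonneg by (intro sum_nonneg mult_nonneg_nonneg) auto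
  qed
  finally show ?thesis
    using variance_BC_le_adjacent_mass by simp
qed

lemma expectation_BC_ge:
  assumes deg: "\<And>i. i < n \<Longrightarrow> 2 \<le> exp_degree n p i"
  shows "2 * real n / 3 \<le> E (BC n)"
proof -
  have "(\<Sum>i<n. 2\<^sup>2) \<le> (\<Sum>i<n. (exp_degree n p i)\<^sup>2)"
    using deg by (intro sum_mono power_mono) auto
  then show ?thesis
    using sum_degree_sq_le[OF deg] by simp
qed

lemma variance_BC_le:
  assumes "0 < n" and deg: "\<And>i. i < n \<Longrightarrow> 2 \<le> exp_degree n p i"
  shows "measure_pmf.variance M (BC n) \<le> (3 / n + 18 / sqrt n) * (E (BC n))\<^sup>2"
proof -
  define \<mu> where "\<mu> = E (BC n)"
  have n_le: "2 * real n \<le> 3 * \<mu>"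
    using expectation_BC_ge[OF deg] by (simp add: \<mu>_def)
  then have "0 < \<mu>"
    using assms(1) by simp
  have "sqrt (6 * \<mu>) * sqrt n = sqrt (3 * \<mu> * (2 * n))"
    by (simp add: real_sqrt_mult[symmetric] ac_simps)
  also have "\<dots> \<le> sqrt ((3 * \<mu>)\<^sup>2)"
    using n_le \<open>0 < \<mu>\<close> by (intro real_sqrt_le_mono) (simp add: power2_eq_square)
  also have "\<dots> = 3 * \<mu>"
    using \<open>0 < \<mu>\<close> by (subst real_sqrt_abs) simp
  finally have "sqrt (6 * \<mu>) * sqrt n \<le> 3 * \<mu>" .
  then have "6 * sqrt (6 * \<mu>) * \<mu> \<le> 18 / sqrt n * \<mu>\<^sup>2"
    using \<open>0 < \<mu>\<close> assms(1) by (simp add: field_simps power2_eq_square)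
  moreover have "2 * \<mu> \<le> 3 / n * \<mu>\<^sup>2"
    using n_le \<open>0 < \<mu>\<close> assms(1) by (simp add: field_simps power2_eq_square)
  ultimately show ?thesis
    using variance_BC_le_sqrt[OF deg] by (simp add: \<mu>_def distrib_right)
qed

lemma BC_concentration:
  assumes "0 < n" "\<And>i. i < n \<Longrightarrow> 2 \<le> exp_degree n p i" "0 < \<delta>"
  shows "1 - (3 / n + 18 / sqrt n) / \<delta>\<^sup>2
    \<le> measure_pmf.prob (random_graph n p)
         {G. \<bar>BC n G - measure_pmf.expectation (random_graph n p) (BC n)\<bar>
             \<le> \<delta> * measure_pmf.expectation (random_graph n p) (BC n)}"
proof -
  have "0 < E (BC n)"
    using expectation_BC_ge[OF assms(2)] assms(1) by linarith
  then have "1 - measure_pmf.variance M (BC n) / (\<delta> * E (BC n))\<^sup>2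
      \<le> measure_pmf.prob M {G. \<bar>BC n G - E (BC n)\<bar> \<le> \<delta> * E (BC n)}"
    using assms(3) by (intro prob_near_expectation_ge) simp_all
  moreover have "measure_pmf.variance M (BC n) / (\<delta> * E (BC n))\<^sup>2 \<le> (3 / n + 18 / sqrt n) / \<delta>\<^sup>2"
    using variance_BC_le[OF assms(1,2)] \<open>0 < E (BC n)\<close> assms(3)
    by (simp add: power_mult_distrib field_simps)
  ultimately show ?thesis
    unfolding random_graph_eq by linarith
qed

end

theorem proposition4:
  fixes P :: "nat \<Rightarrow> nat \<Rightarrow> nat \<Rightarrow> real"
  assumes sym: "\<And>n i j. i < n \<Longrightarrow> j < n \<Longrightarrow> P n i j = P n j i"
    and range: "\<And>n i j. i < n \<Longrightarrow> j < n \<Longrightarrow> 0 \<le> P n i j \<and> P n i j \<le> 1"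
    and omega: "\<And>C. C > 0 \<Longrightarrow> eventually (\<lambda>n. \<forall>i<n. \<forall>j<n. i \<noteq> j \<longrightarrow>
                   P n i j \<ge> C * (ln (real n) / real n)) sequentially"
  shows "\<exists>\<epsilon>>0. \<exists>\<delta>::nat \<Rightarrow> real. \<delta> \<longlonglongrightarrow> 0 \<and>
           eventually (\<lambda>n. measure_pmf.prob (random_graph n (P n))
              {G. \<bar>BC n G - measure_pmf.expectation (random_graph n (P n)) (BC n)\<bar>
                  \<le> \<delta> n * measure_pmf.expectation (random_graph n (P n)) (BC n)}
              > 1 - real n powr (-\<epsilon>)) sequentially"
proof -
  define \<delta> :: "nat \<Rightarrow> real" where "\<delta> n = real n powr (-1/8)" for n
  have "eventually (\<lambda>n. \<forall>i<n. 2 \<le> exp_degree n (P n) i) sequentially"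
    by (rule eventually_exp_degree_ge_2, rule omega) simp
  moreover have "eventually (\<lambda>n. (3 / n + 18 / sqrt n) / (\<delta> n)\<^sup>2 < real n powr (-(1/5))) sequentially"
    unfolding \<delta>_def by real_asymp
  ultimately have "eventually (\<lambda>n. measure_pmf.prob (random_graph n (P n))
      {G. \<bar>BC n G - measure_pmf.expectation (random_graph n (P n)) (BC n)\<bar>
          \<le> \<delta> n * measure_pmf.expectation (random_graph n (P n)) (BC n)}
      > 1 - real n powr (-(1/5))) sequentially"
    using eventually_gt_at_top[of 0]
  proof eventually_elim
    case (elim n)
    interpret edge_probabilities n "P n"
      using sym range by unfold_locales auto
    show ?case
      using BC_concentration[of "\<delta> n"] elim by (simp add: \<delta>_def)
  qed
  moreover have "\<delta> \<longlonglongrightarrow> 0"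
    unfolding \<delta>_def by real_asymp
  ultimately show ?thesis
    by (intro exI[of _ "1/5"] exI[of _ \<delta>]) auto
qed

end
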